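(* Let $N\ge1$. Disregarding height assignments, any two $N$-cube Adinkras are isomorphic; i.e. there is a bijection between their vertex sets preserving adjacency, edge colors and the boson/fermion bipartition which, after switching a suitable set of vertices, also preserves edge parities.
   Context: An Adinkra of dimension $N$ is a finite connected simple graph $G=(V,E)$ together with: (1) a bipartition of $V$ into bosons and fermions such that every edge joins a boson and a fermion; (2) a height function $\mathrm{hgt}:V\to\mathbb{Z}$ with $|\mathrm{hgt}(u)-\mathrm{hgt}(v)|=1$ for every edge $uv$; (3) a coloring of $E$ by colors $\{1,\dots,N\}$ such that each vertex is incident to exactly one edge of each color; (4) an edge parity $\pi:E\to\mathbb{Z}_2$ (edges of parity $1$ are called dashed). These must satisfy: every path with edge colors $(i,j)$, $i\neq j$, lies in a unique 4-cycle with colors $(i,j,i,j)$, and every such two-colored 4-cycle has an odd number of dashed edges. An $N$-cube Adinkra is an Adinkra of dimension $N$ with $2^N$ vertices (its underlying graph is the $N$-dimensional hypercube). Switching a vertex reverses the parity of all edges incident to it. *)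

theory Defs
  imports Main
begin

text \<open>Vertices V :: 'v set; edges E are 2-element
  subsets of V; boson v says v is a boson (else fermion); hgt is the height;
  col e is the colour of edge e; par e = True means e is dashed (parity 1).\<close>

definition adinkra ::
  "nat \<Rightarrow> 'v set \<Rightarrow> 'v set set \<Rightarrow> ('v \<Rightarrow> bool) \<Rightarrow> ('v \<Rightarrow> int)
     \<Rightarrow> ('v set \<Rightarrow> nat) \<Rightarrow> ('v set \<Rightarrow> bool) \<Rightarrow> bool" where
  "adinkra N V E boson hgt col par \<longleftrightarrow>
     finite V \<and> V \<noteq> {} \<and>
     \<comment> \<open>simple graph\<close>
     (\<forall>e\<in>E. \<exists>u v. e = {u, v} \<and> u \<in> V \<and> v \<in> V \<and> u \<noteq> v) \<and>
     \<comment> \<open>connected\<close>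
     (\<forall>u\<in>V. \<forall>v\<in>V. (\<lambda>x y. {x, y} \<in> E)\<^sup>*\<^sup>* u v) \<and>
     \<comment> \<open>bipartition into bosons and fermions\<close>
     (\<forall>u v. {u, v} \<in> E \<longrightarrow> boson u \<noteq> boson v) \<and>
     \<comment> \<open>height function\<close>
     (\<forall>u v. {u, v} \<in> E \<longrightarrow> \<bar>hgt u - hgt v\<bar> = 1) \<and>
     \<comment> \<open>edge colouring by colours 1..N, each vertex has exactly one edge of each colour\<close>
     (\<forall>e\<in>E. col e \<in> {1..N}) \<and>
     (\<forall>v\<in>V. \<forall>i\<in>{1..N}. \<exists>!e. e \<in> E \<and> v \<in> e \<and> col e = i) \<and>
     \<comment> \<open>every (i,j)-path lies in a unique (i,j,i,j) 4-cycle, which has an odd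
        number of dashed edges\<close>
     (\<forall>u v w i j. i \<noteq> j \<and> {u, v} \<in> E \<and> col {u, v} = i \<and> {v, w} \<in> E \<and> col {v, w} = j
        \<longrightarrow> (\<exists>!x. {w, x} \<in> E \<and> col {w, x} = i \<and> {x, u} \<in> E \<and> col {x, u} = j)) \<and>
     (\<forall>u v w x i j. i \<noteq> j \<and> {u, v} \<in> E \<and> col {u, v} = i \<and> {v, w} \<in> E \<and> col {v, w} = j
        \<and> {w, x} \<in> E \<and> col {w, x} = i \<and> {x, u} \<in> E \<and> col {x, u} = j
        \<longrightarrow> odd (length (filter par [{u, v}, {v, w}, {w, x}, {x, u}])))"

definition cube_adinkra ::
  "nat \<Rightarrow> 'v set \<Rightarrow> 'v set set \<Rightarrow> ('v \<Rightarrow> bool) \<Rightarrow> ('v \<Rightarrow> int)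
     \<Rightarrow> ('v set \<Rightarrow> nat) \<Rightarrow> ('v set \<Rightarrow> bool) \<Rightarrow> bool" where
  "cube_adinkra N V E boson hgt col par \<longleftrightarrow>
     adinkra N V E boson hgt col par \<and> card V = 2 ^ N"

definition switch_par :: "'v set \<Rightarrow> ('v set \<Rightarrow> bool) \<Rightarrow> 'v set \<Rightarrow> bool" where
  "switch_par S par e = (par e \<noteq> odd (card (e \<inter> S)))"

end

theory Submission imports Defs begin

text \<open>Fix a base vertex. Since the colour-i neighbour maps are commuting involutions,
  every vertex is reached from the base by applying the neighbour maps for a set of colours
  T \<subseteq> {1..N}; for an N-cube Adinkra the map T \<mapsto> vertex is a bijection, so both
  Adinkras carry the same coloured hypercube in these coordinates, and matching the base
  points' statistics matches bosons with bosons. The two parity functions then differ by a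
  Z/2-valued 1-cochain on the cube which, since every coloured square has an odd number of
  dashed edges in both Adinkras, sums to zero around each square. Such a cocycle on the cube
  is the coboundary of a function g on the vertices, and switching the vertices where g
  holds turns one parity function into the other.\<close>

definition toggle :: "nat \<Rightarrow> nat set \<Rightarrow> nat set" where
  "toggle i T = (if i \<in> T then T - {i} else insert i T)"

locale adinkra_graph =
  fixes N :: nat and V :: "'a set" and E :: "'a set set" and boson :: "'a \<Rightarrow> bool"
    and hgt :: "'a \<Rightarrow> int" and col :: "'a set \<Rightarrow> nat" and par :: "'a set \<Rightarrow> bool"
  assumes adinkra: "adinkra N V E boson hgt col par"
begin

lemma edge_doubleton: "e \<in> E \<Longrightarrow> \<exists>x y. e = {x, y} \<and> x \<in> V \<and> y \<in> V \<and> x \<noteq> y"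
  using adinkra by (simp add: adinkra_def)

lemma V_nonempty: "V \<noteq> {}"
  using adinkra by (simp add: adinkra_def)

lemma connected: "u \<in> V \<Longrightarrow> v \<in> V \<Longrightarrow> (\<lambda>x y. {x, y} \<in> E)\<^sup>*\<^sup>* u v"
  using adinkra by (simp add: adinkra_def)

lemma boson_edge: "{u, v} \<in> E \<Longrightarrow> boson u \<noteq> boson v"
  using adinkra by (simp add: adinkra_def)

lemma col_edge: "e \<in> E \<Longrightarrow> col e \<in> {1..N}"
  using adinkra by (simp add: adinkra_def)

lemma ex1_edge_col: "v \<in> V \<Longrightarrow> i \<in> {1..N} \<Longrightarrow> \<exists>!e. e \<in> E \<and> v \<in> e \<and> col e = i"
  using adinkra by (simp add: adinkra_def)

lemma square_closes:
  "i \<noteq> j \<Longrightarrow> {u, v} \<in> E \<Longrightarrow> col {u, v} = i \<Longrightarrow> {v, w} \<in> E \<Longrightarrow> col {v, w} = j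
    \<Longrightarrow> \<exists>x. {w, x} \<in> E \<and> col {w, x} = i \<and> {x, u} \<in> E \<and> col {x, u} = j"
  using adinkra unfolding adinkra_def by (elim conjE) metis

lemma square_odd_dashed:
  "i \<noteq> j \<Longrightarrow> {u, v} \<in> E \<Longrightarrow> col {u, v} = i \<Longrightarrow> {v, w} \<in> E \<Longrightarrow> col {v, w} = j
    \<Longrightarrow> {w, x} \<in> E \<Longrightarrow> col {w, x} = i \<Longrightarrow> {x, u} \<in> E \<Longrightarrow> col {x, u} = j
    \<Longrightarrow> odd (length (filter par [{u, v}, {v, w}, {w, x}, {x, u}]))"
  using adinkra by (simp add: adinkra_def)

lemma edge_in_V: "{u, v} \<in> E \<Longrightarrow> u \<in> V \<and> v \<in> V \<and> u \<noteq> v"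
  using edge_doubleton by (metis doubleton_eq_iff)

definition nbr :: "nat \<Rightarrow> 'a \<Rightarrow> 'a" where
  "nbr i v = (THE w. {v, w} \<in> E \<and> col {v, w} = i)"

lemma nbr_unique:
  assumes "v \<in> V" "i \<in> {1..N}" "{v, w} \<in> E" "col {v, w} = i" "{v, w'} \<in> E" "col {v, w'} = i"
  shows "w = w'"
proof -
  have "{v, w} = {v, w'}" using ex1_edge_col[OF assms(1,2)] assms(3-6) by blast
  moreover have "w \<noteq> v" using edge_in_V[OF assms(3)] by blast
  ultimately show ?thesis by (metis doubleton_eq_iff)
qed

lemma nbr_edge:
  assumes "v \<in> V" "i \<in> {1..N}"
  shows "{v, nbr i v} \<in> E" and "col {v, nbr i v} = i"
proof -
  obtain e where e: "e \<in> E" "v \<in> e" "col e = i" using ex1_edge_col[OF assms] by blast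
  then obtain w where w: "{v, w} \<in> E \<and> col {v, w} = i"
    using edge_doubleton by (metis insert_commute insertE singletonD)
  have "{v, nbr i v} \<in> E \<and> col {v, nbr i v} = i"
    unfolding nbr_def by (rule theI[of _ w]) (use w nbr_unique[OF assms] in blast)+
  then show "{v, nbr i v} \<in> E" "col {v, nbr i v} = i" by auto
qed

lemma nbr_eqI: "v \<in> V \<Longrightarrow> i \<in> {1..N} \<Longrightarrow> {v, w} \<in> E \<Longrightarrow> col {v, w} = i \<Longrightarrow> w = nbr i v"
  using nbr_unique nbr_edge by blast

lemma nbr_in_V: "v \<in> V \<Longrightarrow> i \<in> {1..N} \<Longrightarrow> nbr i v \<in> V"
  using nbr_edge edge_in_V by blast

lemma nbr_nbr: assumes "v \<in> V" "i \<in> {1..N}" shows "nbr i (nbr i v) = v"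
proof -
  have "{nbr i v, v} \<in> E" "col {nbr i v, v} = i" using nbr_edge[OF assms] by (auto simp: insert_commute)
  then show ?thesis using nbr_eqI[OF nbr_in_V[OF assms] assms(2)] by metis
qed

lemma boson_nbr: "v \<in> V \<Longrightarrow> i \<in> {1..N} \<Longrightarrow> boson (nbr i v) = (\<not> boson v)"
  using nbr_edge boson_edge by blast

lemma nbr_commute:
  assumes "v \<in> V" "i \<in> {1..N}" "j \<in> {1..N}"
  shows "nbr i (nbr j v) = nbr j (nbr i v)"
proof (cases "i = j")
  case False
  let ?u = "nbr i v"
  have u: "?u \<in> V" "nbr j ?u \<in> V" using nbr_in_V assms by blast+
  obtain x where x: "{nbr j ?u, x} \<in> E" "col {nbr j ?u, x} = i" "{x, v} \<in> E" "col {x, v} = j"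
    using square_closes[OF False nbr_edge[OF assms(1,2)] nbr_edge[OF u(1) assms(3)]] by blast
  have "x = nbr i (nbr j ?u)" using nbr_eqI[OF u(2) assms(2) x(1,2)] .
  moreover have "x = nbr j v" using nbr_eqI[OF assms(1,3)] x(3,4) by (simp add: insert_commute)
  ultimately show ?thesis by (metis nbr_nbr[OF u(2) assms(2)])
qed simp

lemma square_parity:
  assumes "v \<in> V" "i \<in> {1..N}" "j \<in> {1..N}" "i \<noteq> j"
  shows "(par {v, nbr i v} \<noteq> par {nbr i v, nbr j (nbr i v)})
     \<longleftrightarrow> \<not> (par {v, nbr j v} \<noteq> par {nbr j v, nbr i (nbr j v)})"
proof -
  let ?x = "nbr i v" and ?y = "nbr j v" and ?z = "nbr j (nbr i v)"
  have V: "?x \<in> V" "?y \<in> V" using nbr_in_V assms by blast+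
  have z: "?z = nbr i ?y" using nbr_commute assms by metis
  have "{?z, ?y} \<in> E" "col {?z, ?y} = i" "{?y, v} \<in> E" "col {?y, v} = j"
    using nbr_edge[OF V(2) assms(2)] nbr_edge[OF assms(1,3)] z by (auto simp: insert_commute)
  then have odd: "odd (length (filter par [{v, ?x}, {?x, ?z}, {?z, ?y}, {?y, v}]))"
    using square_odd_dashed[OF assms(4) nbr_edge[OF assms(1,2)] nbr_edge[OF V(1) assms(3)]] by blast
  have edges: "{?z, ?y} = {?y, nbr i ?y}" "{?y, v} = {v, ?y}" using z by auto
  have four: "odd (length (filter par [e1, e2, e3, e4])) \<longleftrightarrow> (par e1 \<noteq> (par e2 \<noteq> (par e3 \<noteq> par e4)))"
    for e1 e2 e3 e4 by auto
  show ?thesis using odd[unfolded edges four] by argo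
qed

lemma foldr_nbr_in_V: "set cs \<subseteq> {1..N} \<Longrightarrow> v \<in> V \<Longrightarrow> foldr nbr cs v \<in> V"
  by (induction cs) (auto intro: nbr_in_V)

lemma foldr_nbr_insort:
  "set cs \<subseteq> {1..N} \<Longrightarrow> i \<in> {1..N} \<Longrightarrow> v \<in> V \<Longrightarrow> foldr nbr (insort i cs) v = nbr i (foldr nbr cs v)"
  by (induction cs) (auto simp: nbr_commute foldr_nbr_in_V)

text \<open>The neighbour maps commute, so the order in which the colours of T are applied is
  irrelevant; sorting merely fixes one.\<close>
definition walk :: "nat set \<Rightarrow> 'a \<Rightarrow> 'a" where
  "walk T v = foldr nbr (sorted_list_of_set T) v"

lemma walk_empty [simp]: "walk {} v = v"
  by (simp add: walk_def)

lemma walk_in_V: "T \<subseteq> {1..N} \<Longrightarrow> v \<in> V \<Longrightarrow> walk T v \<in> V"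
  using finite_subset[of T "{1..N}"] by (simp add: walk_def foldr_nbr_in_V)

lemma walk_insert:
  assumes "T \<subseteq> {1..N}" "i \<in> {1..N}" "i \<notin> T" "v \<in> V"
  shows "walk (insert i T) v = nbr i (walk T v)"
proof -
  have "finite T" using assms(1) finite_subset by blast
  then show ?thesis unfolding walk_def using assms
    by (simp add: sorted_list_of_set_insert foldr_nbr_insort)
qed

lemma toggle_subset: "T \<subseteq> {1..N} \<Longrightarrow> i \<in> {1..N} \<Longrightarrow> toggle i T \<subseteq> {1..N}"
  unfolding toggle_def by auto

lemma square_parity_walk:
  assumes "T \<subseteq> {1..N}" "i \<in> {1..N}" "j \<in> {1..N}" "i \<noteq> j" "i \<notin> T" "j \<notin> T" "v \<in> V"
  shows "(par {walk T v, walk (insert i T) v} \<noteq> par {walk (insert i T) v, walk (insert j (insert i T)) v})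
     \<longleftrightarrow> \<not> (par {walk T v, walk (insert j T) v} \<noteq> par {walk (insert j T) v, walk (insert i (insert j T)) v})"
proof -
  have "walk (insert i T) v = nbr i (walk T v)" "walk (insert j T) v = nbr j (walk T v)"
    "walk (insert j (insert i T)) v = nbr j (nbr i (walk T v))"
    "walk (insert i (insert j T)) v = nbr i (nbr j (walk T v))"
    using walk_insert[of _ _ v] assms by auto
  then show ?thesis unfolding insert_commute[of j i T] by (metis square_parity[OF walk_in_V[OF assms(1,7)] assms(2-4)])
qed

lemma walk_toggle:
  assumes "T \<subseteq> {1..N}" "i \<in> {1..N}" "v \<in> V"
  shows "walk (toggle i T) v = nbr i (walk T v)"
proof (cases "i \<in> T")
  case True
  then have "walk T v = nbr i (walk (T - {i}) v)"
    using walk_insert[of "T - {i}" i v] assms by (simp add: insert_absorb subset_iff)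
  moreover have "walk (T - {i}) v \<in> V" using walk_in_V assms by blast
  ultimately show ?thesis using True nbr_nbr assms(2) by (simp add: toggle_def)
qed (use assms walk_insert in \<open>auto simp: toggle_def\<close>)

lemma boson_walk: "T \<subseteq> {1..N} \<Longrightarrow> v \<in> V \<Longrightarrow> boson (walk T v) = (boson v \<noteq> odd (card T))"
proof (induction T rule: infinite_finite_induct)
  case (infinite T)
  then show ?case using finite_subset by blast
next
  case (insert i T)
  then show ?case using walk_insert boson_nbr walk_in_V by auto
qed simp

lemma walk_surj: assumes "a \<in> V" "v \<in> V" shows "\<exists>T \<subseteq> {1..N}. v = walk T a"
  using connected[OF assms]
proof (induction rule: rtranclp_induct)
  case base
  show ?case by (intro exI[of _ "{}"]) auto
next
  case (step y z)
  then obtain T where T: "T \<subseteq> {1..N}" "y = walk T a" by blast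
  let ?i = "col {y, z}"
  have i: "?i \<in> {1..N}" using col_edge step by blast
  have "y \<in> V" using walk_in_V[OF T(1) assms(1)] T(2) by simp
  then have "z = nbr ?i y" using nbr_eqI i step by blast
  then have "z = walk (toggle ?i T) a" using walk_toggle[OF T(1) i assms(1)] T by simp
  then show ?case using toggle_subset[OF T(1) i] by blast
qed

end

locale pointed_cube_adinkra = adinkra_graph +
  fixes base
  assumes card_V: "card V = 2 ^ N" and base_in_V: "base \<in> V"
begin

lemma bij_walk_base: "bij_betw (\<lambda>T. walk T base) (Pow {1..N}) V"
proof -
  have onto: "(\<lambda>T. walk T base) ` Pow {1..N} = V"
    using walk_surj[OF base_in_V] walk_in_V[OF _ base_in_V] by blast
  then have "inj_on (\<lambda>T. walk T base) (Pow {1..N})"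
    by (intro eq_card_imp_inj_on) (simp_all add: card_V card_Pow)
  then show ?thesis using onto by (simp add: bij_betw_def)
qed

definition coord :: "'a \<Rightarrow> nat set" where
  "coord = inv_into (Pow {1..N}) (\<lambda>T. walk T base)"

lemma coord_subset: "v \<in> V \<Longrightarrow> coord v \<subseteq> {1..N}"
  unfolding coord_def using bij_betw_inv_into[OF bij_walk_base] bij_betwE by blast

lemma walk_coord: "v \<in> V \<Longrightarrow> walk (coord v) base = v"
  unfolding coord_def using bij_betw_inv_into_right[OF bij_walk_base] .

lemma coord_walk: "T \<subseteq> {1..N} \<Longrightarrow> coord (walk T base) = T"
  unfolding coord_def using bij_betw_inv_into_left[OF bij_walk_base] by blast

lemma edge_col_iff_coord:
  assumes "u \<in> V" "v \<in> V"
  shows "{u, v} \<in> E \<and> col {u, v} = i \<longleftrightarrow> i \<in> {1..N} \<and> coord v = toggle i (coord u)"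
proof
  assume e: "{u, v} \<in> E \<and> col {u, v} = i"
  then have i: "i \<in> {1..N}" using col_edge by blast
  have "v = nbr i (walk (coord u) base)" using nbr_eqI[OF assms(1) i] e walk_coord[OF assms(1)] by simp
  then have "v = walk (toggle i (coord u)) base" using walk_toggle[OF coord_subset[OF assms(1)] i base_in_V] by simp
  then show "i \<in> {1..N} \<and> coord v = toggle i (coord u)"
    using coord_walk[OF toggle_subset[OF coord_subset[OF assms(1)] i]] i by simp
next
  assume i: "i \<in> {1..N} \<and> coord v = toggle i (coord u)"
  then have "v = nbr i u"
    using walk_toggle[OF coord_subset[OF assms(1)] _ base_in_V] walk_coord assms by metis
  then show "{u, v} \<in> E \<and> col {u, v} = i" using nbr_edge assms(1) i by blast
qed

end

definition cube_cocycle :: "nat \<Rightarrow> (nat set \<Rightarrow> nat \<Rightarrow> bool) \<Rightarrow> bool" where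
  "cube_cocycle N D \<longleftrightarrow> (\<forall>T i j. T \<subseteq> {1..N} \<longrightarrow> i \<in> {1..N} \<longrightarrow> j \<in> {1..N} \<longrightarrow> i \<notin> T \<longrightarrow> j \<notin> T
     \<longrightarrow> (D T i \<noteq> D (insert i T) j) = (D T j \<noteq> D (insert j T) i))"

text \<open>Integrate the cochain along the monotone path that adds the colours of T in
  increasing order.\<close>
primrec potential :: "(nat set \<Rightarrow> nat \<Rightarrow> bool) \<Rightarrow> nat \<Rightarrow> nat set \<Rightarrow> bool" where
  "potential D 0 T = False"
| "potential D (Suc k) T =
    (if Suc k \<in> T then potential D k (T - {Suc k}) \<noteq> D (T - {Suc k}) (Suc k) else potential D k T)"

lemma potential_insert:
  assumes "cube_cocycle N D"
  shows "k \<le> N \<Longrightarrow> T \<subseteq> {1..k} \<Longrightarrow> i \<in> {1..k} \<Longrightarrow> i \<notin> T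
    \<Longrightarrow> potential D k (insert i T) = (potential D k T \<noteq> D T i)"
proof (induction k arbitrary: T)
  case (Suc k)
  consider "i = Suc k" | "i \<noteq> Suc k" "Suc k \<in> T" | "i \<noteq> Suc k" "Suc k \<notin> T" by blast
  then show ?case
  proof cases
    case 1
    then have "insert i T - {Suc k} = T" "Suc k \<notin> T" using Suc.prems by auto
    then show ?thesis using 1 by simp
  next
    case 2
    define T' where "T' = T - {Suc k}"
    have T': "T' \<subseteq> {1..k}" "i \<notin> T'" "Suc k \<notin> T'" "T = insert (Suc k) T'" "insert i T - {Suc k} = insert i T'"
      using Suc.prems 2 unfolding T'_def by auto
    have i: "i \<in> {1..k}" using Suc.prems 2 by auto
    then have IH: "potential D k (insert i T') = (potential D k T' \<noteq> D T' i)"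
      using Suc.IH T' Suc.prems by simp
    have "T' \<subseteq> {1..N}" "i \<in> {1..N}" "Suc k \<in> {1..N}" using T'(1) i Suc.prems(1) by auto
    then have "(D T' i \<noteq> D (insert i T') (Suc k)) = (D T' (Suc k) \<noteq> D (insert (Suc k) T') i)"
      using assms T'(2,3) unfolding cube_cocycle_def by blast
    then show ?thesis using 2 T' IH by auto
  next
    case 3
    then have "T \<subseteq> {1..k}" "i \<in> {1..k}" using Suc.prems by (auto simp: subset_iff le_Suc_eq)
    then show ?thesis using 3 Suc by simp
  qed
qed simp

lemma cube_cocycle_has_potential:
  assumes "cube_cocycle N D"
  shows "\<exists>g. \<forall>T i. T \<subseteq> {1..N} \<longrightarrow> i \<in> {1..N} \<longrightarrow> i \<notin> T \<longrightarrow> g (insert i T) = (g T \<noteq> D T i)"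
  using potential_insert[OF assms order.refl] by blast

lemma switch_par_doubleton:
  "u \<noteq> v \<Longrightarrow> switch_par S par {u, v} = (par {u, v} \<noteq> ((u \<in> S) \<noteq> (v \<in> S)))"
  unfolding switch_par_def by (cases "u \<in> S"; cases "v \<in> S") auto

locale cube_adinkra_pair =
  A1: pointed_cube_adinkra N V1 E1 boson1 hgt1 col1 par1 a +
  A2: pointed_cube_adinkra N V2 E2 boson2 hgt2 col2 par2 b
  for N V1 E1 boson1 hgt1 col1 par1 a V2 E2 boson2 hgt2 col2 par2 b +
  assumes same_statistics: "boson2 b = boson1 a"
begin

definition iso :: "'a \<Rightarrow> 'b" where
  "iso v = A2.walk (A1.coord v) b"

lemma iso_in_V2: "v \<in> V1 \<Longrightarrow> iso v \<in> V2"
  unfolding iso_def using A2.walk_in_V A1.coord_subset A2.base_in_V by blast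

lemma coord_iso: "v \<in> V1 \<Longrightarrow> A2.coord (iso v) = A1.coord v"
  unfolding iso_def using A2.coord_walk A1.coord_subset by blast

lemma bij_iso: "bij_betw iso V1 V2"
  using bij_betw_trans[OF bij_betw_inv_into[OF A1.bij_walk_base] A2.bij_walk_base]
  unfolding iso_def A1.coord_def comp_def .

lemma iso_edge_col_iff:
  assumes "u \<in> V1" "v \<in> V1"
  shows "{iso u, iso v} \<in> E2 \<and> col2 {iso u, iso v} = i \<longleftrightarrow> {u, v} \<in> E1 \<and> col1 {u, v} = i"
proof -
  have "{iso u, iso v} \<in> E2 \<and> col2 {iso u, iso v} = i \<longleftrightarrow> i \<in> {1..N} \<and> A2.coord (iso v) = toggle i (A2.coord (iso u))"
    using A2.edge_col_iff_coord iso_in_V2 assms by blast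
  also have "\<dots> \<longleftrightarrow> i \<in> {1..N} \<and> A1.coord v = toggle i (A1.coord u)"
    using coord_iso assms by simp
  also have "\<dots> \<longleftrightarrow> {u, v} \<in> E1 \<and> col1 {u, v} = i"
    using A1.edge_col_iff_coord assms by blast
  finally show ?thesis .
qed

lemma boson_iso:
  assumes "v \<in> V1" shows "boson2 (iso v) = boson1 v"
proof -
  have "boson2 (iso v) = (boson2 b \<noteq> odd (card (A1.coord v)))"
    unfolding iso_def using A2.boson_walk A1.coord_subset A2.base_in_V assms by blast
  moreover have "boson1 v = (boson1 a \<noteq> odd (card (A1.coord v)))"
    using A1.boson_walk[OF A1.coord_subset[OF assms] A1.base_in_V] A1.walk_coord[OF assms] by simp
  ultimately show ?thesis using same_statistics by simp
qed

definition par_diff :: "nat set \<Rightarrow> nat \<Rightarrow> bool" where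
  "par_diff T i = (par1 {A1.walk T a, A1.walk (insert i T) a} \<noteq> par2 {A2.walk T b, A2.walk (insert i T) b})"

lemma cube_cocycle_par_diff: "cube_cocycle N par_diff"
  unfolding cube_cocycle_def
proof (intro allI impI)
  fix T i j assume h: "T \<subseteq> {1..N}" "i \<in> {1..N}" "j \<in> {1..N}" "i \<notin> T" "j \<notin> T"
  show "(par_diff T i \<noteq> par_diff (insert i T) j) = (par_diff T j \<noteq> par_diff (insert j T) i)"
  proof (cases "i = j")
    case False
    show ?thesis
      using A1.square_parity_walk[OF h(1-3) False h(4,5) A1.base_in_V]
        A2.square_parity_walk[OF h(1-3) False h(4,5) A2.base_in_V]
      unfolding par_diff_def by argo
  qed simp
qed

lemma par_iso_switch:
  "\<exists>S \<subseteq> V1. \<forall>u\<in>V1. \<forall>v\<in>V1. {u, v} \<in> E1 \<longrightarrow> par2 {iso u, iso v} = switch_par S par1 {u, v}"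
proof -
  obtain g where g: "\<And>T i. T \<subseteq> {1..N} \<Longrightarrow> i \<in> {1..N} \<Longrightarrow> i \<notin> T \<Longrightarrow> g (insert i T) = (g T \<noteq> par_diff T i)"
    using cube_cocycle_has_potential[OF cube_cocycle_par_diff] by blast
  define S where "S = {v \<in> V1. g (A1.coord v)}"
  have upward: "par2 {iso u, iso v} = switch_par S par1 {u, v}"
    if uv: "u \<in> V1" "v \<in> V1" "{u, v} \<in> E1" and i: "i \<in> {1..N}" "i \<notin> A1.coord u"
      and v: "A1.coord v = insert i (A1.coord u)"
    for u v i
  proof -
    let ?T = "A1.coord u"
    have T: "?T \<subseteq> {1..N}" using A1.coord_subset uv by blast
    have "A1.walk ?T a = u" "A1.walk (insert i ?T) a = v"
      using A1.walk_coord uv(1,2) unfolding v[symmetric] by blast+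
    then have "par_diff ?T i = (par1 {u, v} \<noteq> par2 {iso u, iso v})"
      unfolding par_diff_def iso_def v by simp
    moreover have "u \<noteq> v" using A1.edge_in_V uv(3) by blast
    moreover have "(u \<in> S) = g ?T" "(v \<in> S) = g (insert i ?T)"
      using uv(1,2) unfolding S_def v[symmetric] by blast+
    ultimately show ?thesis using g[OF T i] switch_par_doubleton[of u v S par1] by argo
  qed
  have "par2 {iso u, iso v} = switch_par S par1 {u, v}" if uv: "u \<in> V1" "v \<in> V1" "{u, v} \<in> E1" for u v
  proof -
    let ?i = "col1 {u, v}"
    have i: "?i \<in> {1..N}" and toggled: "A1.coord v = toggle ?i (A1.coord u)"
      using A1.edge_col_iff_coord[OF uv(1,2), of ?i] uv(3) by simp_all
    show ?thesis
    proof (cases "?i \<in> A1.coord u")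
      case True
      then have "A1.coord u = insert ?i (A1.coord v)" "?i \<notin> A1.coord v"
        using toggled unfolding toggle_def by auto
      moreover have "{v, u} \<in> E1" using uv(3) by (simp add: insert_commute)
      ultimately have "par2 {iso v, iso u} = switch_par S par1 {v, u}"
        using upward[of v u ?i] uv(1,2) i by blast
      moreover have "{v, u} = {u, v}" "{iso v, iso u} = {iso u, iso v}" by auto
      ultimately show ?thesis by simp
    next
      case False
      then have "A1.coord v = insert ?i (A1.coord u)" using toggled unfolding toggle_def by simp
      then show ?thesis using upward[OF uv i False] by blast
    qed
  qed
  moreover have "S \<subseteq> V1" unfolding S_def by blast
  ultimately show ?thesis by blast
qed

end

theorem mainTheorem2:
  fixes V1 :: "'a set" and E1 :: "'a set set" and boson1 :: "'a \<Rightarrow> bool"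
    and hgt1 :: "'a \<Rightarrow> int" and col1 :: "'a set \<Rightarrow> nat" and par1 :: "'a set \<Rightarrow> bool"
    and V2 :: "'b set" and E2 :: "'b set set" and boson2 :: "'b \<Rightarrow> bool"
    and hgt2 :: "'b \<Rightarrow> int" and col2 :: "'b set \<Rightarrow> nat" and par2 :: "'b set \<Rightarrow> bool"
    and N :: nat
  assumes "N \<ge> 1"
    and "cube_adinkra N V1 E1 boson1 hgt1 col1 par1"
    and "cube_adinkra N V2 E2 boson2 hgt2 col2 par2"
  shows "\<exists>f. bij_betw f V1 V2
    \<and> (\<forall>u\<in>V1. \<forall>v\<in>V1. {f u, f v} \<in> E2 \<longleftrightarrow> {u, v} \<in> E1)
    \<and> (\<forall>u\<in>V1. \<forall>v\<in>V1. {u, v} \<in> E1 \<longrightarrow> col2 {f u, f v} = col1 {u, v})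
    \<and> (\<forall>v\<in>V1. boson2 (f v) = boson1 v)
    \<and> (\<exists>S \<subseteq> V1. \<forall>u\<in>V1. \<forall>v\<in>V1. {u, v} \<in> E1 \<longrightarrow>
          par2 {f u, f v} = switch_par S par1 {u, v})"
proof -
  interpret G1: adinkra_graph N V1 E1 boson1 hgt1 col1 par1
    using assms(2) by unfold_locales (simp add: cube_adinkra_def)
  interpret G2: adinkra_graph N V2 E2 boson2 hgt2 col2 par2
    using assms(3) by unfold_locales (simp add: cube_adinkra_def)
  obtain a b0 where a: "a \<in> V1" and b0: "b0 \<in> V2"
    using G1.V_nonempty G2.V_nonempty by blast
  define b where "b = (if boson2 b0 = boson1 a then b0 else G2.nbr 1 b0)"
  have "b \<in> V2" "boson2 b = boson1 a"
    using b0 G2.nbr_in_V G2.boson_nbr assms(1) unfolding b_def by auto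
  then interpret cube_adinkra_pair N V1 E1 boson1 hgt1 col1 par1 a V2 E2 boson2 hgt2 col2 par2 b
    using assms(2,3) a by unfold_locales (simp_all add: cube_adinkra_def)
  have "{iso u, iso v} \<in> E2 \<longleftrightarrow> {u, v} \<in> E1" "{u, v} \<in> E1 \<Longrightarrow> col2 {iso u, iso v} = col1 {u, v}"
    if "u \<in> V1" "v \<in> V1" for u v
    using iso_edge_col_iff[OF that] by blast+
  then show ?thesis
    using bij_iso boson_iso par_iso_switch by (intro exI[of _ iso]) blast
qed

end
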